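(* Let measurements be modeled by a Gaussian process on $\mathbb{R}^2$ with squared-exponential kernel $k(x,x')=\sigma_0^2\exp\!\left(-\frac{\|x-x'\|^2}{2l^2}\right)$ ($\sigma_0^2>0$, $l>0$) and i.i.d. additive Gaussian noise of variance $\omega^2>0$. Let $0<\Delta<\sigma_0^2$, let $r_{max}=l\sqrt{-\log\left(1-\frac{\Delta}{\sigma_0^2}\right)}$, and let $\alpha>1$. Given a disk of radius $\frac{1}{\alpha}r_{max}$ centered at $x_i$, taking $n_\alpha$ measurements at $x_i$ suffices to ensure $MSE(x)\le\Delta$ for all points $x$ inside the disk, whenever $$n_\alpha\ge\left\lceil\frac{\omega^2}{\sigma_0^2}\,\frac{1}{\left(1-\frac{\Delta}{\sigma_0^2}\right)^{\frac{1}{\alpha^2}-1}-1}\right\rceil.$$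
   Context: For measurement locations $X=(x_1,\dots,x_n)$ (repetitions allowed, meaning multiple measurements at one location), the GP posterior variance at $x$ is $\hat\sigma^2_{x|X}=k(x,x)-\mathbf{k}(x,X)\left[\mathbf{K}(X,X)+\omega^2\mathbf{I}\right]^{-1}\mathbf{k}(X,x)$, where $\mathbf{K}(X,X)$ has entries $k(x_p,x_q)$ and $\mathbf{k}(x,X)=(k(x,x_1),\dots,k(x,x_n))$. The MSE at $x$ is $MSE(x)=\hat\sigma^2_{x|X}$. *)

theory Defs
  imports "HOL-Analysis.Analysis"
begin

definition se_kernel :: "real \<Rightarrow> real \<Rightarrow> real^2 \<Rightarrow> real^2 \<Rightarrow> real" where
  "se_kernel sigma0sq l x x' = sigma0sq * exp (- ((norm (x - x')) ^ 2 / (2 * l ^ 2)))"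

text \<open>GP posterior variance at x given measurement locations X (indexed by a finite type,
  repetitions allowed) and noise variance omegasq:
  k(x,x) - k(x,X) [K(X,X) + omegasq I]^{-1} k(X,x).\<close>
definition gp_post_var ::
  "(real^2 \<Rightarrow> real^2 \<Rightarrow> real) \<Rightarrow> real \<Rightarrow> ('n::finite \<Rightarrow> real^2) \<Rightarrow> real^2 \<Rightarrow> real" where
  "gp_post_var k omegasq X x =
     k x x - (\<chi> j. k x (X j)) \<bullet>
       (matrix_inv ((\<chi> p q. k (X p) (X q)) + omegasq *\<^sub>R mat 1) *v (\<chi> j. k (X j) x))"

definition MSE ::
  "(real^2 \<Rightarrow> real^2 \<Rightarrow> real) \<Rightarrow> real \<Rightarrow> ('n::finite \<Rightarrow> real^2) \<Rightarrow> real^2 \<Rightarrow> real" where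
  "MSE k omegasq X x = gp_post_var k omegasq X x"

definition r_max :: "real \<Rightarrow> real \<Rightarrow> real \<Rightarrow> real" where
  "r_max sigma0sq l \<Delta> = l * sqrt (- ln (1 - \<Delta> / sigma0sq))"

end

theory Submission
  imports Defs
begin

text \<open>With all n measurements at \<open>xi\<close>, the Gram matrix is \<open>s J + w I\<close> (J the all-ones
  matrix, \<open>s = \<sigma>\<^sub>0\<^sup>2\<close>, \<open>w = \<omega>\<^sup>2\<close>), whose inverse is explicit.  Hence
  \<open>MSE(x) = s - n s\<^sup>2 \<rho> / (n s + w)\<close> with \<open>\<rho> = exp (-\<parallel>x - xi\<parallel>\<^sup>2 / l\<^sup>2)\<close>, which decreases
  as \<open>\<rho>\<close> grows.  On the disk of radius \<open>r_max / \<alpha>\<close> we have \<open>\<rho> \<ge> q powr (1 / \<alpha>\<^sup>2)\<close> with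
  \<open>q = 1 - \<Delta> / s\<close>, and the lower bound on n is exactly the condition \<open>MSE \<le> \<Delta>\<close> at this
  worst-case correlation.\<close>

lemma matrix_inv_unique:
  fixes A B :: "'a::field^'n^'n"
  assumes "A ** B = mat 1"
  shows "matrix_inv A = B"
proof -
  have "A ** matrix_inv A = mat 1 \<and> matrix_inv A ** A = mat 1"
    unfolding matrix_inv_def
    by (rule someI[of _ B]) (simp add: assms matrix_left_right_inverse1[OF assms])
  then have "matrix_inv A ** A = mat 1" ..
  have "matrix_inv A = matrix_inv A ** (A ** B)"
    using assms by simp
  also have "\<dots> = (matrix_inv A ** A) ** B"
    by (simp add: matrix_mul_assoc)
  also have "\<dots> = B"
    using \<open>matrix_inv A ** A = mat 1\<close> by simp
  finally show ?thesis .
qed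

lemma matrix_inv_const_plus_scaled_id:
  fixes s w :: real
  defines "t \<equiv> s / (real CARD('n) * s + w)"
  assumes "w \<noteq> 0" and "real CARD('n) * s + w \<noteq> 0"
  shows "matrix_inv ((\<chi> i j. s) + w *\<^sub>R mat 1 :: real^'n::finite^'n) =
         (\<chi> i j. ((if i = j then 1 else 0) - t) / w)"
proof (rule matrix_inv_unique)
  let ?M = "(\<chi> i j. s) + w *\<^sub>R mat 1 :: real^'n^'n"
  let ?N = "\<chi> i j. ((if i = j then 1 else 0) - t) / w :: real^'n^'n"
  define g :: "'n \<Rightarrow> 'n \<Rightarrow> real" where "g k j = ((if j = k then 1 else 0) - t) / w" for k j
  have entry: "(\<Sum>j\<in>UNIV. (s + (if i = j then w else 0)) * g k j) = (if i = k then 1 else 0)" for i k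
  proof -
    have "(\<Sum>j\<in>UNIV. (s + (if i = j then w else 0)) * g k j) = s * (\<Sum>j\<in>UNIV. g k j) + w * g k i"
      by (simp add: distrib_right sum.distrib sum_distrib_left if_distrib[where f="\<lambda>x. x * _"]
          cong: if_cong)
    also have "(\<Sum>j\<in>UNIV. g k j) = (1 - real CARD('n) * t) / w"
      by (simp add: g_def sum_divide_distrib[symmetric] sum_subtractf)
    also have "s * ((1 - real CARD('n) * t) / w) + w * g k i
        = (s - t * (real CARD('n) * s + w)) / w + (if i = k then 1 else 0)"
      using assms(2) by (simp add: g_def field_simps)
    also have "s - t * (real CARD('n) * s + w) = 0"
      using assms(3) by (simp add: t_def)
    finally show ?thesis
      by simp
  qed
  have "(?M ** ?N) $ i $ k = mat 1 $ i $ k" for i k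
  proof -
    have "(?M ** ?N) $ i $ k = (\<Sum>j\<in>UNIV. (s + (if i = j then w else 0)) * g k j)"
      by (simp add: matrix_matrix_mult_def mat_def g_def if_distrib[where f="\<lambda>x. w * x"]
          cong: if_cong)
    also have "\<dots> = mat 1 $ i $ k"
      by (simp add: entry mat_def)
    finally show ?thesis .
  qed
  then show "?M ** ?N = mat 1"
    by (simp add: vec_eq_iff)
qed

lemma gp_post_var_repeated_location:
  fixes k :: "real^2 \<Rightarrow> real^2 \<Rightarrow> real" and X :: "'n::finite \<Rightarrow> real^2"
  assumes X: "\<And>j. X j = xi" and w: "w \<noteq> 0" and nz: "real CARD('n) * k xi xi + w \<noteq> 0"
  shows "gp_post_var k w X x =
           k x x - real CARD('n) * k x xi * k xi x / (real CARD('n) * k xi xi + w)"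
proof -
  let ?n = "real CARD('n)" and ?D = "real CARD('n) * k xi xi + w"
  let ?t = "k xi xi / ?D"
  have "(\<Sum>j\<in>UNIV. ((if i = j then 1 else 0) - ?t) / w * k xi x) = k xi x / ?D" for i :: 'n
  proof -
    have "(\<Sum>j\<in>UNIV. ((if i = j then 1 else 0) - ?t) / w * k xi x) = k xi x * (1 - ?n * ?t) / w"
      by (simp add: sum_distrib_right[symmetric] sum_divide_distrib[symmetric] sum_subtractf)
    also have "1 - ?n * ?t = w / ?D"
      using nz by (simp add: field_simps)
    finally show ?thesis
      using w by simp
  qed
  then have "matrix_inv ((\<chi> p q. k (X p) (X q)) + w *\<^sub>R mat 1) *v (\<chi> j. k (X j) x)
      = (\<chi> j. k xi x / ?D :: real^'n)"
    using matrix_inv_const_plus_scaled_id[OF w nz]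
    by (simp add: X matrix_vector_mult_def vec_eq_iff)
  then show ?thesis
    by (simp add: gp_post_var_def X inner_vec_def)
qed

lemma se_kernel_self: "se_kernel s l x x = s"
  by (simp add: se_kernel_def)

lemma se_kernel_commute: "se_kernel s l x y = se_kernel s l y x"
  by (simp add: se_kernel_def norm_minus_commute)

lemma se_kernel_squared: "se_kernel s l x y ^ 2 = s\<^sup>2 * exp (- (dist x y ^ 2 / l ^ 2))"
proof -
  have "exp (- (dist x y ^ 2 / (2 * l ^ 2))) ^ 2 = exp (- (dist x y ^ 2 / l ^ 2))"
    by (simp flip: exp_double)
  then show ?thesis
    by (simp add: se_kernel_def dist_norm power_mult_distrib)
qed

lemma MSE_se_kernel_repeated_location:
  fixes X :: "'n::finite \<Rightarrow> real^2"
  assumes "s \<ge> 0" and "w > 0" and "\<And>j. X j = xi"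
  shows "MSE (se_kernel s l) w X x =
           s - real CARD('n) * s\<^sup>2 * exp (- (dist x xi ^ 2 / l ^ 2)) / (real CARD('n) * s + w)"
proof -
  have "real CARD('n) * s + w > 0"
    using assms(1,2) by (intro add_nonneg_pos) simp_all
  then have "real CARD('n) * se_kernel s l xi xi + w \<noteq> 0"
    by (simp add: se_kernel_self)
  then have "MSE (se_kernel s l) w X x =
      s - real CARD('n) * (se_kernel s l x xi * se_kernel s l xi x) / (real CARD('n) * s + w)"
    using assms(2,3) by (simp add: MSE_def gp_post_var_repeated_location se_kernel_self mult.assoc)
  also have "se_kernel s l x xi * se_kernel s l xi x = s\<^sup>2 * exp (- (dist x xi ^ 2 / l ^ 2))"
    by (simp add: se_kernel_commute[of s l xi x] se_kernel_squared flip: power2_eq_square)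
  finally show ?thesis
    by (simp add: mult.assoc)
qed

lemma exp_neg_sq_dist_ge_powr_in_disk:
  assumes "0 \<le> \<Delta>" and "\<Delta> < s" and "l > 0" and "\<alpha> > 0"
    and "dist x xi \<le> r_max s l \<Delta> / \<alpha>"
  shows "(1 - \<Delta> / s) powr (1 / \<alpha>\<^sup>2) \<le> exp (- (dist x xi ^ 2 / l ^ 2))"
proof -
  define q where "q = 1 - \<Delta> / s"
  have q: "0 < q" "q \<le> 1"
    using assms(1,2) by (auto simp: q_def field_simps)
  have "dist x xi ^ 2 \<le> (l * sqrt (- ln q) / \<alpha>) ^ 2"
    using assms(5) by (intro power_mono) (simp_all add: r_max_def q_def)
  also have "\<dots> = l\<^sup>2 * (- ln q) / \<alpha>\<^sup>2"
    using q by (simp add: power_divide power_mult_distrib)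
  finally have "ln q / \<alpha>\<^sup>2 \<le> - (dist x xi ^ 2 / l ^ 2)"
    using assms(3,4) by (simp add: field_simps)
  then show ?thesis
    using q by (simp add: powr_def q_def[symmetric])
qed

lemma measurement_count_bound:
  fixes q \<beta> s w n :: real
  assumes "0 < q" and "q < 1" and "\<beta> < 1" and "s > 0"
    and "w / s * (1 / (q powr (\<beta> - 1) - 1)) \<le> n"
  shows "w * q \<le> n * s * (q powr \<beta> - q)"
proof -
  have gap: "q powr (\<beta> - 1) - 1 > 0"
    using powr_less_mono'[of q "\<beta> - 1" 0] assms(1-3) by simp
  have "w \<le> n * s * (q powr (\<beta> - 1) - 1)"
    using assms(4,5) gap by (simp add: field_simps)
  then have "w * q \<le> n * s * (q powr (\<beta> - 1) - 1) * q"
    using assms(1) by (simp add: mult_right_mono)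
  also have "\<dots> = n * s * (q powr \<beta> - q)"
    using assms(1) by (simp add: powr_diff field_simps)
  finally show ?thesis .
qed

lemma repeated_location_post_var_le:
  fixes s w n \<rho> \<Delta> :: real
  assumes "s > 0" and "w > 0" and "n \<ge> 0"
    and "w * (1 - \<Delta> / s) \<le> n * s * (\<rho> - (1 - \<Delta> / s))"
  shows "s - n * s\<^sup>2 * \<rho> / (n * s + w) \<le> \<Delta>"
proof -
  define q where "q = 1 - \<Delta> / s"
  have pos: "n * s + w > 0"
    using assms(1-3) by (intro add_nonneg_pos) simp_all
  have "q * (n * s + w) \<le> n * s * \<rho>"
    using assms(4) by (simp add: q_def[symmetric] algebra_simps)
  then have "s * (q * (n * s + w)) \<le> s * (n * s * \<rho>)"
    using assms(1) by (intro mult_left_mono) simp_all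
  then have "s * q \<le> n * s\<^sup>2 * \<rho> / (n * s + w)"
    using pos by (simp add: pos_le_divide_eq power2_eq_square ac_simps)
  moreover have "s * q = s - \<Delta>"
    using assms(1) by (simp add: q_def field_simps)
  ultimately show ?thesis
    by linarith
qed

theorem lemma3:
  fixes sigma0 l omega \<Delta> \<alpha> :: real and xi :: "real^2" and X :: "'n::finite \<Rightarrow> real^2"
  assumes "sigma0 > 0" and "l > 0" and "omega > 0"
    and "0 < \<Delta>" and "\<Delta> < sigma0^2" and "\<alpha> > 1"
    and "\<forall>j. X j = xi"
    and "int CARD('n) \<ge>
           ceiling (omega^2 / sigma0^2 *
             (1 / ((1 - \<Delta> / sigma0^2) powr (1 / \<alpha>^2 - 1) - 1)))"
  shows "\<forall>x. dist x xi \<le> r_max (sigma0^2) l \<Delta> / \<alpha> \<longrightarrow>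
           MSE (se_kernel (sigma0^2) l) (omega^2) X x \<le> \<Delta>"
proof (intro allI impI)
  fix x :: "real^2"
  assume disk: "dist x xi \<le> r_max (sigma0^2) l \<Delta> / \<alpha>"
  define s where "s = sigma0^2"
  define w where "w = omega^2"
  define n where "n = real CARD('n)"
  define q where "q = 1 - \<Delta> / s"
  define \<rho> where "\<rho> = exp (- (dist x xi ^ 2 / l ^ 2))"
  have s: "s > 0" and w: "w > 0"
    using assms(1,3) by (simp_all add: s_def w_def)
  have q: "0 < q" "q < 1"
    using assms(4,5) s by (simp_all add: q_def s_def field_simps)
  have \<beta>: "1 / \<alpha>\<^sup>2 < 1"
    using assms(6) by simp
  have "w / s * (1 / (q powr (1 / \<alpha>\<^sup>2 - 1) - 1)) \<le> n"
    using assms(8) le_of_int_ceiling[of "w / s * _"]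
    unfolding n_def w_def s_def q_def by linarith
  then have "w * q \<le> n * s * (q powr (1 / \<alpha>\<^sup>2) - q)"
    by (rule measurement_count_bound[OF q \<beta> s])
  also have "\<dots> \<le> n * s * (\<rho> - q)"
    using exp_neg_sq_dist_ge_powr_in_disk[of \<Delta> s l \<alpha> x xi] assms(2,4-6) disk s
    by (intro mult_left_mono) (simp_all add: s_def q_def \<rho>_def n_def)
  finally have "s - n * s\<^sup>2 * \<rho> / (n * s + w) \<le> \<Delta>"
    by (intro repeated_location_post_var_le[OF s w]) (simp_all add: n_def q_def)
  then show "MSE (se_kernel (sigma0^2) l) (omega^2) X x \<le> \<Delta>"
    using MSE_se_kernel_repeated_location[of s w X xi l x] s w assms(7)
    by (simp add: s_def w_def n_def \<rho>_def)
qed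

end
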